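(* Let $n\ge 1$ and let $A\in\mathcal{E}_n$ have rank $r$ (as an abelian group). Then there exists a finite set $E$ of mod-linear functions $l:\mathbb{Z}^{2n}\to\mathbb{Z}$ of order $\le r$ such that for all integers $a_1\le b_1,\dots,a_n\le b_n$ the following are equivalent: (i) there exists $(x_1,\dots,x_n)\in A$ with $a_i\le x_i\le b_i$ for all $i=1,\dots,n$; (ii) $0\le l(a_1,b_1,a_2,b_2,\dots,a_n,b_n)$ for every $l\in E$.
   Context: For $v=(v_1,\dots,v_n),w=(w_1,\dots,w_n)\in\mathbb{Z}^n$ write $v\mid w$ if $v_i$ divides $w_i$ for every $i$ with $v_i\neq 0$. For $v\in\mathbb{Q}^n$ with support $S=\{i: v_i\neq 0\}$ of size $s$, define the linear map $L_v:\mathbb{Q}^n\to\mathbb{Q}^{\binom{s}{2}+n-s}$ by $L_v(t_1,\dots,t_n)=\big((\tfrac{t_i}{v_i}-\tfrac{t_j}{v_j})_{i<j,\ i,j\in S},\ (t_k)_{k\notin S}\big)$, where the pairs $(i,j)$ are listed in lexicographic order and then the $t_k$, $k\notin S$, in increasing order of $k$. The class $\mathcal{E}_n$ of subgroups of $\mathbb{Z}^n$ is defined inductively: a nonzero subgroup $A\subseteq\mathbb{Z}^n$ belongs to $\mathcal{E}_n$ iff there is a nonzero $v\in A$ with (1) $v\mid w$ for all $w\in A$, and (2) $L_v(A)=\{0\}$ or $L_v(A)\in\mathcal{E}_{\binom{s}{2}+n-s}$ (where $s$ is the number of nonzero components of $v$; under (1), $L_v(A)\subseteq\mathbb{Z}^{\binom{s}{2}+n-s}$).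 Mod-linear functions $l:\mathbb{Z}^N\to\mathbb{Z}$ of order $\le r$ are defined inductively: those of order $\le 0$ are the coordinate projections $(x_1,\dots,x_N)\mapsto x_i$; for $r>0$, $l$ has order $\le r$ if there are mod-linear functions $l_1,l_2$ of order $\le r-1$ and nonzero integers $m_1,m_2$ with $l(x)=\lfloor l_1(x)/m_1\rfloor-\lceil l_2(x)/m_2\rceil$ for all $x\in\mathbb{Z}^N$. *)

theory Defs
  imports Complex_Main
begin

text \<open>Vectors in Z^n (resp. Q^n) are represented as lists of length n (0-indexed).\<close>

definition zerovec :: "nat \<Rightarrow> 'a::zero list" where
  "zerovec n = replicate n 0"

definition vdvd :: "int list \<Rightarrow> int list \<Rightarrow> bool" where
  "vdvd v w \<longleftrightarrow> (\<forall>i<length v. v ! i \<noteq> 0 \<longrightarrow> v ! i dvd w ! i)"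

definition supp_list :: "int list \<Rightarrow> nat list" where
  "supp_list v = filter (\<lambda>i. v ! i \<noteq> 0) [0..<length v]"

definition Lv :: "int list \<Rightarrow> rat list \<Rightarrow> rat list" where
  "Lv v t =
     map (\<lambda>(i, j). t ! i / of_int (v ! i) - t ! j / of_int (v ! j))
         [(i, j). i \<leftarrow> supp_list v, j \<leftarrow> supp_list v, i < j]
     @ map (\<lambda>k. t ! k) (filter (\<lambda>k. v ! k = 0) [0..<length v])"

definition int_subgroup :: "nat \<Rightarrow> int list set \<Rightarrow> bool" where
  "int_subgroup n A \<longleftrightarrow> (\<forall>x\<in>A. length x = n) \<and> zerovec n \<in> A \<and>
     (\<forall>x\<in>A. \<forall>y\<in>A. map2 (+) x y \<in> A) \<and> (\<forall>x\<in>A. map uminus x \<in> A)"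

inductive inE :: "nat \<Rightarrow> int list set \<Rightarrow> bool" where
  "\<lbrakk> int_subgroup n A; A \<noteq> {zerovec n};
     v \<in> A; v \<noteq> zerovec n;
     \<forall>w\<in>A. vdvd v w;
     s = length (supp_list v); m = (s choose 2) + n - s;
     Lv v ` (map rat_of_int ` A) = {zerovec m} \<or>
       (\<exists>B. inE m B \<and> Lv v ` (map rat_of_int ` A) = map rat_of_int ` B) \<rbrakk>
   \<Longrightarrow> inE n A"

definition lin_indep_Z :: "nat \<Rightarrow> int list list \<Rightarrow> bool" where
  "lin_indep_Z n vs \<longleftrightarrow>
     (\<forall>c :: nat \<Rightarrow> int. (\<forall>k<n. (\<Sum>i<length vs. c i * (vs ! i) ! k) = 0)
        \<longrightarrow> (\<forall>i<length vs. c i = 0))"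

definition has_rank :: "nat \<Rightarrow> int list set \<Rightarrow> nat \<Rightarrow> bool" where
  "has_rank n A r \<longleftrightarrow>
     (\<exists>vs. length vs = r \<and> set vs \<subseteq> A \<and> lin_indep_Z n vs) \<and>
     \<not> (\<exists>vs. length vs = Suc r \<and> set vs \<subseteq> A \<and> lin_indep_Z n vs)"

fun modlin :: "nat \<Rightarrow> nat \<Rightarrow> (int list \<Rightarrow> int) \<Rightarrow> bool" where
  "modlin N 0 l = (\<exists>i<N. \<forall>x. length x = N \<longrightarrow> l x = x ! i)"
| "modlin N (Suc r) l = (\<exists>l1 l2 (m1::int) (m2::int). modlin N r l1 \<and> modlin N r l2 \<and>
      m1 \<noteq> 0 \<and> m2 \<noteq> 0 \<and>
      (\<forall>x. length x = N \<longrightarrow>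
         l x = \<lfloor>rat_of_int (l1 x) / rat_of_int m1\<rfloor> - \<lceil>rat_of_int (l2 x) / rat_of_int m2\<rceil>))"

definition interleave :: "int list \<Rightarrow> int list \<Rightarrow> int list" where
  "interleave a b = concat (map (\<lambda>(x, y). [x, y]) (zip a b))"

end

theory Submission
  imports Defs
begin

text \<open>
  Induction along the definition of \<open>\<E>\<^sub>n\<close>. Let \<open>v \<in> A\<close> divide every element of \<open>A\<close>, with
  support \<open>S\<close>, and write \<open>x\<^sub>i = v\<^sub>i q\<^sub>i\<close> for \<open>x \<in> A\<close>, \<open>i \<in> S\<close>. The condition \<open>a\<^sub>i \<le> x\<^sub>i \<le> b\<^sub>i\<close>
  says that \<open>q\<^sub>i\<close> lies in an interval \<open>[lo\<^sub>i, hi\<^sub>i]\<close> whose ends are ceilings and floors of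
  \<open>a\<^sub>i/v\<^sub>i\<close> and \<open>b\<^sub>i/v\<^sub>i\<close>. Hence the box meets \<open>A\<close> iff every \<open>[lo\<^sub>i, hi\<^sub>i]\<close> is nonempty and
  \<open>L\<^sub>v(A)\<close> meets the box given by \<open>lo\<^sub>i - hi\<^sub>j \<le> q\<^sub>i - q\<^sub>j \<le> hi\<^sub>i - lo\<^sub>j\<close> (\<open>i < j\<close> in \<open>S\<close>) and
  \<open>a\<^sub>k \<le> x\<^sub>k \<le> b\<^sub>k\<close> (\<open>k \<notin> S\<close>): conversely, translating a point of \<open>A\<close> by a multiple \<open>t v\<close>
  shifts all \<open>q\<^sub>i\<close> by \<open>t\<close> without changing \<open>L\<^sub>v\<close>, and a common \<open>t\<close> exists because pairwise
  intersecting intervals of \<open>\<int>\<close> have a common point. The new bounds are order-1 mod-linear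
  functions of \<open>(a, b)\<close>, so substituting them into the inequalities obtained for \<open>L\<^sub>v(A)\<close> raises
  the order by one. Each step of the induction also contributes one vector to a linearly
  independent family in \<open>A\<close>, which bounds the number of steps by the rank.
\<close>

declare modlin.simps [simp del]

lemma interleave_Cons: "interleave (x # a) (y # b) = x # y # interleave a b"
  by (simp add: interleave_def)

lemma length_interleave: "length a = length b \<Longrightarrow> length (interleave a b) = 2 * length a"
proof (induction a arbitrary: b)
  case Nil
  then show ?case by (simp add: interleave_def)
next
  case (Cons x a)
  then show ?case by (cases b) (auto simp: interleave_Cons)
qed

lemma nth_interleave:
  assumes "length a = length b" "i < length a"
  shows "interleave a b ! (2 * i) = a ! i \<and> interleave a b ! (2 * i + 1) = b ! i"
  using assms
proof (induction a arbitrary: b i)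
  case Nil
  then show ?case by simp
next
  case (Cons x a)
  then obtain y b' where "b = y # b'" by (cases b) auto
  with Cons show ?case by (cases i) (auto simp: interleave_Cons)
qed

lemma nth_interleave_parity:
  assumes "length a = length b" "q < 2 * length a"
  shows "interleave a b ! q = (if even q then a ! (q div 2) else b ! (q div 2))"
proof -
  have "q = 2 * (q div 2) + q mod 2" "q div 2 < length a" using assms(2) by auto
  then show ?thesis using nth_interleave[OF assms(1)] by (metis add_0_right even_iff_mod_2_eq_zero
        not_mod_2_eq_1_eq_0)
qed

section \<open>Mod-linear functions\<close>

lemma modlin_cong:
  assumes "modlin N k f" "\<And>z. length z = N \<Longrightarrow> f z = g z"
  shows "modlin N k g"
  using assms by (cases k) (auto simp: modlin.simps)

definition modlin_multiple :: "nat \<Rightarrow> nat \<Rightarrow> (int list \<Rightarrow> int) \<Rightarrow> bool" where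
  "modlin_multiple N k f \<longleftrightarrow>
     (\<exists>G c. c \<noteq> 0 \<and> modlin N k G \<and> (\<forall>z. length z = N \<longrightarrow> G z = c * f z))"

lemma modlin_multipleI: "modlin N k f \<Longrightarrow> modlin_multiple N k f"
  unfolding modlin_multiple_def by (rule exI[of _ f], rule exI[of _ 1]) simp

lemma modlin_multiple_cong:
  assumes "modlin_multiple N k f" "\<And>z. length z = N \<Longrightarrow> f z = g z"
  shows "modlin_multiple N k g"
  using assms unfolding modlin_multiple_def by auto

lemma modlin_multiple_uminus: "modlin N k f \<Longrightarrow> modlin_multiple N k (\<lambda>z. - f z)"
  unfolding modlin_multiple_def by (rule exI[of _ f], rule exI[of _ "-1"]) simp

text \<open>A nonzero factor of an argument is absorbed into the divisor, which is why multiples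
  of order-\<open>k\<close> functions still yield functions of order \<open>k + 1\<close>.\<close>
lemma modlin_Suc_floor_minus_ceiling:
  assumes "modlin_multiple N k f1" "modlin_multiple N k f2" "m1 \<noteq> 0" "m2 \<noteq> 0"
  shows "modlin N (Suc k)
    (\<lambda>z. \<lfloor>rat_of_int (f1 z) / rat_of_int m1\<rfloor> - \<lceil>rat_of_int (f2 z) / rat_of_int m2\<rceil>)"
proof -
  obtain G1 c1 where 1: "c1 \<noteq> 0" "modlin N k G1" "\<forall>z. length z = N \<longrightarrow> G1 z = c1 * f1 z"
    using assms(1) unfolding modlin_multiple_def by blast
  obtain G2 c2 where 2: "c2 \<noteq> 0" "modlin N k G2" "\<forall>z. length z = N \<longrightarrow> G2 z = c2 * f2 z"
    using assms(2) unfolding modlin_multiple_def by blast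
  show ?thesis
    unfolding modlin.simps(2)
    by (rule exI[of _ G1], rule exI[of _ G2], rule exI[of _ "c1 * m1"], rule exI[of _ "c2 * m2"])
      (use 1 2 assms(3,4) in \<open>simp add: field_simps\<close>)
qed

lemma modlin_one_double_proj:
  assumes "q < N"
  shows "modlin N 1 (\<lambda>z. 2 * z ! q)" "modlin N 1 (\<lambda>z. - 2 * z ! q)"
proof -
  have proj: "modlin_multiple N 0 (\<lambda>z. z ! q)"
    using assms by (intro modlin_multipleI) (auto simp: modlin.simps)
  show "modlin N 1 (\<lambda>z. 2 * z ! q)"
    using modlin_Suc_floor_minus_ceiling[OF proj proj, of 1 "-1"] by (simp add: ceiling_minus)
  show "modlin N 1 (\<lambda>z. - 2 * z ! q)"
    using modlin_Suc_floor_minus_ceiling[OF proj proj, of "-1" 1] by (simp add: ceiling_minus)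
qed

lemma modlin_multiple_proj: "q < N \<Longrightarrow> modlin_multiple N 1 (\<lambda>z. z ! q)"
  unfolding modlin_multiple_def
  by (rule exI[of _ "\<lambda>z. 2 * z ! q"], rule exI[of _ 2]) (use modlin_one_double_proj in simp)

lemma modlin_Suc_Suc:
  assumes "modlin N (Suc k) l"
  shows "modlin N (Suc (Suc k)) l"
proof -
  obtain h where "modlin N k h" using assms by (auto simp: modlin.simps)
  then have "modlin N (Suc k) (\<lambda>z. \<lfloor>rat_of_int (h z) / rat_of_int 1\<rfloor> - \<lceil>rat_of_int (h z) / rat_of_int 1\<rceil>)"
    by (intro modlin_Suc_floor_minus_ceiling modlin_multipleI) auto
  then have zero: "modlin N (Suc k) (\<lambda>z. 0)" by simp
  have "modlin N (Suc (Suc k)) (\<lambda>z. \<lfloor>rat_of_int (l z) / rat_of_int 1\<rfloor> - \<lceil>rat_of_int 0 / rat_of_int 1\<rceil>)"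
    using modlin_Suc_floor_minus_ceiling[OF modlin_multipleI[OF assms] modlin_multipleI[OF zero], of 1 1]
    by simp
  then show ?thesis by simp
qed

lemma modlin_mono:
  assumes "modlin N k l" "0 < k" "k \<le> j"
  shows "modlin N j l"
  using assms(3)
proof (induction j rule: dec_induct)
  case base
  then show ?case using assms(1) .
next
  case (step j)
  then obtain j' where "j = Suc j'" using assms(2) by (cases j) auto
  then show ?case using step.IH modlin_Suc_Suc by simp
qed

lemma modlin_Suc_comp:
  assumes len: "\<And>z :: int list. length z = N \<Longrightarrow> length (g z) = M"
    and l: "modlin M (Suc k) l"
    and comp: "\<And>h. modlin M k h \<Longrightarrow> modlin_multiple N j (\<lambda>z. h (g z))"
  shows "modlin N (Suc j) (\<lambda>z. l (g z))"
proof -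
  obtain l1 l2 m1 m2 where h: "modlin M k l1" "modlin M k l2" "m1 \<noteq> 0" "m2 \<noteq> 0"
    "\<forall>x. length x = M \<longrightarrow>
       l x = \<lfloor>rat_of_int (l1 x) / rat_of_int m1\<rfloor> - \<lceil>rat_of_int (l2 x) / rat_of_int m2\<rceil>"
    using l by (auto simp: modlin.simps)
  have "modlin N (Suc j)
    (\<lambda>z. \<lfloor>rat_of_int (l1 (g z)) / rat_of_int m1\<rfloor> - \<lceil>rat_of_int (l2 (g z)) / rat_of_int m2\<rceil>)"
    by (rule modlin_Suc_floor_minus_ceiling[OF comp[OF h(1)] comp[OF h(2)] h(3,4)])
  then show ?thesis by (rule modlin_cong) (simp add: h(5) len)
qed

lemma modlin_multiple_comp:
  assumes len: "\<And>z :: int list. length z = N \<Longrightarrow> length (g z) = M"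
    and coords: "\<And>q. q < M \<Longrightarrow> modlin_multiple N 1 (\<lambda>z. g z ! q)"
  shows "modlin M k l \<Longrightarrow> modlin_multiple N (Suc k) (\<lambda>z. l (g z))"
proof (induction k arbitrary: l)
  case 0
  then obtain q where "q < M" "\<And>x. length x = M \<Longrightarrow> l x = x ! q"
    by (auto simp: modlin.simps)
  then show ?case using coords[of q] len by (auto intro: modlin_multiple_cong)
next
  case (Suc k)
  have "modlin N (Suc (Suc k)) (\<lambda>z. l (g z))"
    using len Suc.prems Suc.IH by (rule modlin_Suc_comp)
  then show ?case by (rule modlin_multipleI)
qed

lemma modlin_comp:
  assumes "\<And>z :: int list. length z = N \<Longrightarrow> length (g z) = M"
    and "\<And>q. q < M \<Longrightarrow> modlin_multiple N 1 (\<lambda>z. g z ! q)"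
    and "modlin M (Suc k) l"
  shows "modlin N (Suc (Suc k)) (\<lambda>z. l (g z))"
  using assms(1,3) modlin_multiple_comp[OF assms(1,2)] by (rule modlin_Suc_comp)

section \<open>Reduction along a dividing vector\<close>

lemma int_subgroup_length: "int_subgroup n A \<Longrightarrow> x \<in> A \<Longrightarrow> length x = n"
  by (simp add: int_subgroup_def)

lemma int_subgroup_add: "int_subgroup n A \<Longrightarrow> x \<in> A \<Longrightarrow> y \<in> A \<Longrightarrow> map2 (+) x y \<in> A"
  by (simp add: int_subgroup_def)

lemma int_subgroup_smult:
  assumes A: "int_subgroup n A" and v: "v \<in> A"
  shows "map ((*) t) v \<in> A"
proof -
  have nat_mult: "map ((*) (int k)) v \<in> A" for k
  proof (induction k)
    case 0
    have "map ((*) (int 0)) v = zerovec n"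
      using int_subgroup_length[OF A v] by (simp add: zerovec_def list_eq_iff_nth_eq)
    then show ?case using A by (simp only: int_subgroup_def)
  next
    case (Suc k)
    have "map2 (+) (map ((*) (int k)) v) v = map ((*) (int (Suc k))) v"
      by (induction v) (auto simp: algebra_simps)
    then show ?case using int_subgroup_add[OF A Suc v] by simp
  qed
  show ?thesis
  proof (cases "0 \<le> t")
    case True
    then show ?thesis using nat_mult[of "nat t"] by simp
  next
    case False
    have "map uminus (map ((*) (int (nat (- t)))) v) = map ((*) t) v"
      using False by simp
    moreover have "map uminus (map ((*) (int (nat (- t)))) v) \<in> A"
      using nat_mult[of "nat (- t)"] A unfolding int_subgroup_def by blast
    ultimately show ?thesis by (simp only:)
  qed
qed

definition quot_lower :: "int \<Rightarrow> int \<Rightarrow> int \<Rightarrow> int" where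
  "quot_lower c a b =
     (if 0 < c then \<lceil>rat_of_int a / rat_of_int c\<rceil> else \<lceil>rat_of_int b / rat_of_int c\<rceil>)"

definition quot_upper :: "int \<Rightarrow> int \<Rightarrow> int \<Rightarrow> int" where
  "quot_upper c a b =
     (if 0 < c then \<lfloor>rat_of_int b / rat_of_int c\<rfloor> else \<lfloor>rat_of_int a / rat_of_int c\<rfloor>)"

lemma mult_between_iff:
  assumes "c \<noteq> 0"
  shows "(a \<le> c * y \<and> c * y \<le> b) \<longleftrightarrow> (quot_lower c a b \<le> y \<and> y \<le> quot_upper c a b)"
proof (cases "0 < c")
  case True
  have "a \<le> c * y \<longleftrightarrow> rat_of_int a / rat_of_int c \<le> rat_of_int y"
    using True by (simp add: pos_divide_le_eq mult.commute flip: of_int_mult of_int_le_iff)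
  moreover have "c * y \<le> b \<longleftrightarrow> rat_of_int y \<le> rat_of_int b / rat_of_int c"
    using True by (simp add: pos_le_divide_eq mult.commute flip: of_int_mult of_int_le_iff)
  ultimately show ?thesis
    using True by (simp add: quot_lower_def quot_upper_def ceiling_le_iff le_floor_iff)
next
  case False
  then have c: "c < 0" using assms by simp
  have "a \<le> c * y \<longleftrightarrow> rat_of_int y \<le> rat_of_int a / rat_of_int c"
    using c by (simp add: neg_le_divide_eq mult.commute flip: of_int_mult of_int_le_iff)
  moreover have "c * y \<le> b \<longleftrightarrow> rat_of_int b / rat_of_int c \<le> rat_of_int y"
    using c by (simp add: neg_divide_le_eq mult.commute flip: of_int_mult of_int_le_iff)
  ultimately show ?thesis
    using False by (auto simp: quot_lower_def quot_upper_def ceiling_le_iff le_floor_iff)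
qed

lemma modlin_quot_upper_minus_lower:
  assumes "q1 < N" "q2 < N" "q3 < N" "q4 < N" "c \<noteq> 0" "d \<noteq> 0"
  shows "modlin N 1 (\<lambda>z. quot_upper c (z ! q1) (z ! q2) - quot_lower d (z ! q3) (z ! q4))"
proof -
  have "modlin_multiple N 0 (\<lambda>z. z ! q)" if "q < N" for q
    using that by (intro modlin_multipleI) (auto simp: modlin.simps)
  then have "modlin N (Suc 0)
      (\<lambda>z. \<lfloor>rat_of_int (z ! (if 0 < c then q2 else q1)) / rat_of_int c\<rfloor> -
           \<lceil>rat_of_int (z ! (if 0 < d then q3 else q4)) / rat_of_int d\<rceil>)"
    using assms by (intro modlin_Suc_floor_minus_ceiling) auto
  then show ?thesis
    unfolding One_nat_def by (rule modlin_cong) (auto simp: quot_upper_def quot_lower_def)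
qed

lemma common_point_of_intervals:
  fixes L H :: "'a \<Rightarrow> int"
  assumes "finite S" "S \<noteq> {}" "\<forall>i\<in>S. \<forall>j\<in>S. L j \<le> H i"
  shows "\<exists>t. \<forall>i\<in>S. L i \<le> t \<and> t \<le> H i"
proof -
  have "Max (L ` S) \<in> L ` S" using assms(1,2) by (intro Max_in) auto
  then show ?thesis using assms by (intro exI[of _ "Max (L ` S)"]) auto
qed

lemma ball_ordered_pairs_iff:
  fixes S :: "'a :: linorder set"
  shows "(\<forall>i\<in>S. \<forall>j\<in>S. R i j) \<longleftrightarrow> (\<forall>i\<in>S. R i i) \<and> (\<forall>i\<in>S. \<forall>j\<in>S. i < j \<longrightarrow> R i j \<and> R j i)"
  by (metis linorder_neqE)

definition supp_pairs :: "int list \<Rightarrow> (nat \<times> nat) list" where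
  "supp_pairs v = [(i, j). i \<leftarrow> supp_list v, j \<leftarrow> supp_list v, i < j]"

definition zero_coords :: "int list \<Rightarrow> nat list" where
  "zero_coords v = filter (\<lambda>k. v ! k = 0) [0..<length v]"

definition proj_coords :: "int list \<Rightarrow> (nat \<times> nat + nat) list" where
  "proj_coords v = map Inl (supp_pairs v) @ map Inr (zero_coords v)"

definition Lv_int :: "int list \<Rightarrow> int list \<Rightarrow> int list" where
  "Lv_int v x =
     map (case_sum (\<lambda>(i, j). x ! i div v ! i - x ! j div v ! j) ((!) x)) (proj_coords v)"

lemma set_supp_list: "set (supp_list v) = {i. i < length v \<and> v ! i \<noteq> 0}"
  by (auto simp: supp_list_def)

lemma set_zero_coords: "set (zero_coords v) = {k. k < length v \<and> v ! k = 0}"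
  by (auto simp: zero_coords_def)

lemma set_proj_coords:
  "set (proj_coords v) =
     Inl ` {(i, j). i \<in> set (supp_list v) \<and> j \<in> set (supp_list v) \<and> i < j} \<union>
     Inr ` set (zero_coords v)"
  by (auto simp: proj_coords_def supp_pairs_def split: if_splits)

lemma ball_proj_coords:
  "(\<forall>c\<in>set (proj_coords v). P c) \<longleftrightarrow>
     (\<forall>i\<in>set (supp_list v). \<forall>j\<in>set (supp_list v). i < j \<longrightarrow> P (Inl (i, j))) \<and>
     (\<forall>k\<in>set (zero_coords v). P (Inr k))"
  by (auto simp: set_proj_coords)

lemma length_Lv_int: "length (Lv_int v x) = length (proj_coords v)"
  by (simp add: Lv_int_def)

lemma Lv_of_int:
  assumes "length x = length v" "vdvd v x"
  shows "Lv v (map rat_of_int x) = map rat_of_int (Lv_int v x)"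
proof -
  have "rat_of_int (x ! i) / rat_of_int (v ! i) = rat_of_int (x ! i div v ! i)"
    if "i \<in> set (supp_list v)" for i
    using assms that by (simp add: vdvd_def set_supp_list of_int_div)
  then show ?thesis
    using assms(1)
    by (auto simp: Lv_def Lv_int_def proj_coords_def supp_pairs_def set_supp_list
        zero_coords_def)
qed

definition coord_lower :: "int list \<Rightarrow> nat \<Rightarrow> int list \<Rightarrow> int" where
  "coord_lower v i z = quot_lower (v ! i) (z ! (2 * i)) (z ! (2 * i + 1))"

definition coord_upper :: "int list \<Rightarrow> nat \<Rightarrow> int list \<Rightarrow> int" where
  "coord_upper v i z = quot_upper (v ! i) (z ! (2 * i)) (z ! (2 * i + 1))"

text \<open>For \<open>z = (a\<^sub>1, b\<^sub>1, \<dots>, a\<^sub>n, b\<^sub>n)\<close>, the quotient \<open>x\<^sub>i / v\<^sub>i\<close> of a point of the box ranges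
  over \<open>[coord_lower v i z, coord_upper v i z]\<close>; \<open>proj_lower\<close> and \<open>proj_upper\<close> are the induced
  bounds on \<open>Lv_int v x\<close>.\<close>

definition proj_lower :: "int list \<Rightarrow> int list \<Rightarrow> int list" where
  "proj_lower v z =
     map (case_sum (\<lambda>(i, j). coord_lower v i z - coord_upper v j z) (\<lambda>k. z ! (2 * k)))
       (proj_coords v)"

definition proj_upper :: "int list \<Rightarrow> int list \<Rightarrow> int list" where
  "proj_upper v z =
     map (case_sum (\<lambda>(i, j). coord_upper v i z - coord_lower v j z) (\<lambda>k. z ! (2 * k + 1)))
       (proj_coords v)"

definition proj_box :: "int list \<Rightarrow> int list \<Rightarrow> int list" where
  "proj_box v z = interleave (proj_lower v z) (proj_upper v z)"

definition in_box :: "int list \<Rightarrow> int list \<Rightarrow> int list \<Rightarrow> bool" where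
  "in_box a b x \<longleftrightarrow> list_all2 (\<le>) a x \<and> list_all2 (\<le>) x b"

definition decides_boxes :: "nat \<Rightarrow> int list set \<Rightarrow> (int list \<Rightarrow> int) set \<Rightarrow> bool" where
  "decides_boxes n A E \<longleftrightarrow>
     (\<forall>a b. length a = n \<longrightarrow> length b = n \<longrightarrow> list_all2 (\<le>) a b \<longrightarrow>
        ((\<exists>x\<in>A. in_box a b x) \<longleftrightarrow> (\<forall>l\<in>E. 0 \<le> l (interleave a b))))"

definition box_definable :: "nat \<Rightarrow> int list set \<Rightarrow> nat \<Rightarrow> bool" where
  "box_definable n A r \<longleftrightarrow> (\<exists>E. finite E \<and> (\<forall>l\<in>E. modlin (2 * n) r l) \<and> decides_boxes n A E)"

lemma in_box_iff_nth:
  assumes "length a = length x" "length b = length x"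
  shows "in_box a b x \<longleftrightarrow> (\<forall>i<length x. a ! i \<le> x ! i \<and> x ! i \<le> b ! i)"
  using assms by (auto simp: in_box_def list_all2_conv_all_nth)

lemma in_box_proj_iff:
  "in_box (proj_lower v z) (proj_upper v z) (Lv_int v x) \<longleftrightarrow>
     (\<forall>i\<in>set (supp_list v). \<forall>j\<in>set (supp_list v). i < j \<longrightarrow>
        coord_lower v i z - coord_upper v j z \<le> x ! i div v ! i - x ! j div v ! j \<and>
        x ! i div v ! i - x ! j div v ! j \<le> coord_upper v i z - coord_lower v j z) \<and>
     (\<forall>k\<in>set (zero_coords v). z ! (2 * k) \<le> x ! k \<and> x ! k \<le> z ! (2 * k + 1))"
  by (auto simp: in_box_def proj_lower_def proj_upper_def Lv_int_def list_all2_map1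
      list_all2_map2 list_all2_same ball_proj_coords)

lemma proj_lower_le_upper:
  assumes "\<forall>i\<in>set (supp_list v). coord_lower v i z \<le> coord_upper v i z"
    and "\<forall>k\<in>set (zero_coords v). z ! (2 * k) \<le> z ! (2 * k + 1)"
  shows "list_all2 (\<le>) (proj_lower v z) (proj_upper v z)"
proof -
  have "coord_lower v i z - coord_upper v j z \<le> coord_upper v i z - coord_lower v j z"
    if "i \<in> set (supp_list v)" "j \<in> set (supp_list v)" for i j
    using assms(1) that by (meson diff_mono order.trans)
  then show ?thesis
    using assms(2) by (auto simp: proj_lower_def proj_upper_def list_all2_map1 list_all2_map2
        list_all2_same ball_proj_coords)
qed

lemma modlin_coord_upper_minus_lower:
  assumes "length v = n" "i \<in> set (supp_list v)" "j \<in> set (supp_list v)"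
  shows "modlin (2 * n) 1 (\<lambda>z. coord_upper v i z - coord_lower v j z)"
  unfolding coord_upper_def coord_lower_def
  by (rule modlin_quot_upper_minus_lower) (use assms in \<open>auto simp: set_supp_list\<close>)

lemma modlin_multiple_proj_box:
  assumes v: "length v = n" and q: "q < 2 * length (proj_coords v)"
  shows "modlin_multiple (2 * n) 1 (\<lambda>z. proj_box v z ! q)"
proof -
  define c where "c = proj_coords v ! (q div 2)"
  have c: "c \<in> set (proj_coords v)" using q by (simp add: c_def)
  have box: "proj_box v z ! q = (if even q then proj_lower v z else proj_upper v z) ! (q div 2)"
    for z using q by (simp add: proj_box_def nth_interleave_parity proj_lower_def proj_upper_def)
  show ?thesis
  proof (cases c)
    case (Inl ij)
    then obtain i j where ij: "c = Inl (i, j)" "i \<in> set (supp_list v)" "j \<in> set (supp_list v)"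
      using c by (auto simp: set_proj_coords)
    show ?thesis
    proof (cases "even q")
      case True
      have "modlin_multiple (2 * n) 1 (\<lambda>z. - (coord_upper v j z - coord_lower v i z))"
        using modlin_coord_upper_minus_lower[OF v ij(3,2)] by (rule modlin_multiple_uminus)
      then show ?thesis
        by (rule modlin_multiple_cong) (use q True ij(1) in \<open>simp add: box proj_lower_def c_def\<close>)
    next
      case False
      have "modlin_multiple (2 * n) 1 (\<lambda>z. coord_upper v i z - coord_lower v j z)"
        using modlin_coord_upper_minus_lower[OF v ij(2,3)] by (rule modlin_multipleI)
      then show ?thesis
        by (rule modlin_multiple_cong) (use q False ij(1) in \<open>simp add: box proj_upper_def c_def\<close>)
    qed
  next
    case (Inr k)
    then have "k < n" using c v by (auto simp: set_proj_coords set_zero_coords)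
    then have "modlin_multiple (2 * n) 1 (\<lambda>z. z ! (2 * k + (if even q then 0 else 1)))"
      by (intro modlin_multiple_proj) auto
    then show ?thesis
      by (rule modlin_multiple_cong) (use q Inr in \<open>simp add: box proj_lower_def proj_upper_def c_def\<close>)
  qed
qed

text \<open>The factor \<open>2\<close> only serves to make the bounds on the zero coordinates mod-linear of
  order 1: a bare coordinate has order 0, and its negation is not a coordinate.\<close>

definition base_constraints :: "int list \<Rightarrow> (int list \<Rightarrow> int) set" where
  "base_constraints v =
     (\<lambda>(i, j) z. coord_upper v j z - coord_lower v i z) ` (set (supp_list v) \<times> set (supp_list v)) \<union>
     (\<lambda>k z. 2 * z ! (2 * k + 1)) ` set (zero_coords v) \<union>
     (\<lambda>k z. - 2 * z ! (2 * k)) ` set (zero_coords v)"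

definition step_constraints :: "int list \<Rightarrow> (int list \<Rightarrow> int) set \<Rightarrow> (int list \<Rightarrow> int) set" where
  "step_constraints v E =
     (\<lambda>i z. coord_upper v i z - coord_lower v i z) ` set (supp_list v) \<union>
     (\<lambda>l z. l (proj_box v z)) ` E"

locale dividing_element =
  fixes n :: nat and A :: "int list set" and v :: "int list"
  assumes subgroup: "int_subgroup n A"
    and v_in_A: "v \<in> A"
    and v_nonzero: "v \<noteq> zerovec n"
    and v_divides: "\<And>w. w \<in> A \<Longrightarrow> vdvd v w"
begin

lemma length_v: "length v = n"
  using int_subgroup_length[OF subgroup v_in_A] .

lemma supp_nonempty: "set (supp_list v) \<noteq> {}"
proof
  assume "set (supp_list v) = {}"
  then have "v = zerovec n"
    using length_v by (auto simp: set_supp_list zerovec_def list_eq_iff_nth_eq)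
  then show False using v_nonzero by simp
qed

lemma mult_quotient: "x \<in> A \<Longrightarrow> i \<in> set (supp_list v) \<Longrightarrow> v ! i * (x ! i div v ! i) = x ! i"
  using v_divides[of x] length_v by (auto simp: vdvd_def set_supp_list)

lemma in_box_iff_quotients:
  assumes x: "x \<in> A" and ab: "length a = n" "length b = n" and z: "z = interleave a b"
  shows "in_box a b x \<longleftrightarrow>
    (\<forall>i\<in>set (supp_list v). coord_lower v i z \<le> x ! i div v ! i \<and> x ! i div v ! i \<le> coord_upper v i z) \<and>
    (\<forall>k\<in>set (zero_coords v). z ! (2 * k) \<le> x ! k \<and> x ! k \<le> z ! (2 * k + 1))"
  (is "_ \<longleftrightarrow> ?quotients")
proof -
  have "in_box a b x \<longleftrightarrow> (\<forall>i<n. z ! (2 * i) \<le> x ! i \<and> x ! i \<le> z ! (2 * i + 1))"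
    using nth_interleave[of a b] ab z int_subgroup_length[OF subgroup x] by (simp add: in_box_iff_nth)
  also have "\<dots> \<longleftrightarrow>
    (\<forall>i\<in>set (supp_list v). z ! (2 * i) \<le> v ! i * (x ! i div v ! i) \<and> v ! i * (x ! i div v ! i) \<le> z ! (2 * i + 1)) \<and>
    (\<forall>k\<in>set (zero_coords v). z ! (2 * k) \<le> x ! k \<and> x ! k \<le> z ! (2 * k + 1))"
    using mult_quotient[OF x] length_v by (auto simp: set_supp_list set_zero_coords)
  also have "\<dots> \<longleftrightarrow> ?quotients"
    using mult_between_iff by (simp add: set_supp_list coord_lower_def coord_upper_def)
  finally show ?thesis .
qed

lemma box_reduction:
  assumes ab: "length a = n" "length b = n" and z: "z = interleave a b"
  shows "(\<exists>x\<in>A. in_box a b x) \<longleftrightarrow>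
    (\<forall>i\<in>set (supp_list v). coord_lower v i z \<le> coord_upper v i z) \<and>
    (\<exists>x\<in>A. in_box (proj_lower v z) (proj_upper v z) (Lv_int v x))"
proof
  assume "\<exists>x\<in>A. in_box a b x"
  then obtain x where x: "x \<in> A" "in_box a b x" by blast
  then have quot: "\<forall>i\<in>set (supp_list v).
      coord_lower v i z \<le> x ! i div v ! i \<and> x ! i div v ! i \<le> coord_upper v i z"
    and zero: "\<forall>k\<in>set (zero_coords v). z ! (2 * k) \<le> x ! k \<and> x ! k \<le> z ! (2 * k + 1)"
    using in_box_iff_quotients[OF x(1) ab z] by auto
  have "in_box (proj_lower v z) (proj_upper v z) (Lv_int v x)"
    unfolding in_box_proj_iff using quot zero by (meson diff_mono)
  then show "(\<forall>i\<in>set (supp_list v). coord_lower v i z \<le> coord_upper v i z) \<and>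
    (\<exists>x\<in>A. in_box (proj_lower v z) (proj_upper v z) (Lv_int v x))"
    using quot x(1) by force
next
  assume "(\<forall>i\<in>set (supp_list v). coord_lower v i z \<le> coord_upper v i z) \<and>
    (\<exists>x\<in>A. in_box (proj_lower v z) (proj_upper v z) (Lv_int v x))"
  then obtain x where diag: "\<forall>i\<in>set (supp_list v). coord_lower v i z \<le> coord_upper v i z"
    and x: "x \<in> A" and proj: "in_box (proj_lower v z) (proj_upper v z) (Lv_int v x)"
    by blast
  define q where "q i = x ! i div v ! i" for i
  txt \<open>Translating \<open>x\<close> by \<open>t v\<close> shifts every \<open>q i\<close> by \<open>t\<close> and leaves \<open>Lv_int v x\<close> unchanged.\<close>
  have pairs: "coord_lower v j z - q j \<le> coord_upper v i z - q i \<and>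
      coord_lower v i z - q i \<le> coord_upper v j z - q j"
    if "i \<in> set (supp_list v)" "j \<in> set (supp_list v)" "i < j" for i j
    using proj that unfolding in_box_proj_iff q_def by force
  have "\<forall>i\<in>set (supp_list v). \<forall>j\<in>set (supp_list v).
      coord_lower v j z - q j \<le> coord_upper v i z - q i"
    using diag pairs by (intro ball_ordered_pairs_iff[THEN iffD2]) auto
  then obtain t where t: "\<forall>i\<in>set (supp_list v). coord_lower v i z - q i \<le> t \<and> t \<le> coord_upper v i z - q i"
    using common_point_of_intervals[OF finite_set supp_nonempty,
        of "\<lambda>i. coord_lower v i z - q i" "\<lambda>i. coord_upper v i z - q i"] by blast
  define x' where "x' = map2 (+) x (map ((*) t) v)"
  have "x' \<in> A"
    unfolding x'_def by (intro int_subgroup_add[OF subgroup x] int_subgroup_smult[OF subgroup v_in_A])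
  have "x' ! i div v ! i = q i + t" if "i \<in> set (supp_list v)" for i
    using that int_subgroup_length[OF subgroup x] length_v
    by (simp add: x'_def q_def set_supp_list)
  moreover have "x' ! k = x ! k" if "k \<in> set (zero_coords v)" for k
    using that int_subgroup_length[OF subgroup x] length_v
    by (simp add: x'_def set_zero_coords)
  moreover have "\<forall>k\<in>set (zero_coords v). z ! (2 * k) \<le> x ! k \<and> x ! k \<le> z ! (2 * k + 1)"
    using proj by (simp add: in_box_proj_iff)
  ultimately have "in_box a b x'"
    unfolding in_box_iff_quotients[OF \<open>x' \<in> A\<close> ab z] using t by auto
  then show "\<exists>x\<in>A. in_box a b x" using \<open>x' \<in> A\<close> by blast
qed

lemma decides_boxes_base:
  assumes trivial: "Lv_int v ` A = {Lv_int v v}"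
  shows "decides_boxes n A (base_constraints v)"
  unfolding decides_boxes_def
proof (intro allI impI)
  fix a b :: "int list"
  assume ab: "length a = n" "length b = n"
  define z where "z = interleave a b"
  have "(\<exists>x\<in>A. in_box a b x) \<longleftrightarrow>
      (\<forall>i\<in>set (supp_list v). coord_lower v i z \<le> coord_upper v i z) \<and>
      in_box (proj_lower v z) (proj_upper v z) (Lv_int v v)"
    using box_reduction[OF ab z_def] trivial by (metis image_eqI singletonD v_in_A)
  also have "\<dots> \<longleftrightarrow>
      (\<forall>i\<in>set (supp_list v). \<forall>j\<in>set (supp_list v). coord_lower v i z \<le> coord_upper v j z) \<and>
      (\<forall>k\<in>set (zero_coords v). z ! (2 * k) \<le> 0 \<and> 0 \<le> z ! (2 * k + 1))"
    unfolding in_box_proj_iff ball_ordered_pairs_iff[of _ "\<lambda>i j. coord_lower v i z \<le> coord_upper v j z"]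
    by (auto simp: set_supp_list set_zero_coords)
  also have "\<dots> \<longleftrightarrow> (\<forall>l\<in>base_constraints v. 0 \<le> l z)"
    by (auto simp: base_constraints_def ball_Un)
  finally show "(\<exists>x\<in>A. in_box a b x) \<longleftrightarrow> (\<forall>l\<in>base_constraints v. 0 \<le> l (interleave a b))"
    by (simp add: z_def)
qed

lemma decides_boxes_step:
  assumes E: "decides_boxes (length (proj_coords v)) (Lv_int v ` A) E"
  shows "decides_boxes n A (step_constraints v E)"
  unfolding decides_boxes_def
proof (intro allI impI)
  fix a b :: "int list"
  assume ab: "length a = n" "length b = n" and a_le_b: "list_all2 (\<le>) a b"
  define z where "z = interleave a b"
  have reduction: "(\<exists>x\<in>A. in_box a b x) \<longleftrightarrow>
      (\<forall>i\<in>set (supp_list v). coord_lower v i z \<le> coord_upper v i z) \<and>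
      (\<exists>u\<in>Lv_int v ` A. in_box (proj_lower v z) (proj_upper v z) u)"
    using box_reduction[OF ab z_def] by blast
  have constraints: "(\<forall>l\<in>step_constraints v E. 0 \<le> l z) \<longleftrightarrow>
      (\<forall>i\<in>set (supp_list v). coord_lower v i z \<le> coord_upper v i z) \<and>
      (\<forall>l\<in>E. 0 \<le> l (proj_box v z))"
    by (auto simp: step_constraints_def ball_Un)
  have "(\<exists>x\<in>A. in_box a b x) \<longleftrightarrow> (\<forall>l\<in>step_constraints v E. 0 \<le> l z)"
  proof (cases "\<forall>i\<in>set (supp_list v). coord_lower v i z \<le> coord_upper v i z")
    case False
    then show ?thesis using reduction constraints by blast
  next
    case True
    moreover have "\<forall>k\<in>set (zero_coords v). z ! (2 * k) \<le> z ! (2 * k + 1)"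
      using a_le_b ab nth_interleave[of a b] length_v
      by (auto simp: z_def set_zero_coords list_all2_conv_all_nth)
    ultimately have "list_all2 (\<le>) (proj_lower v z) (proj_upper v z)"
      by (rule proj_lower_le_upper)
    moreover have "length (proj_lower v z) = length (proj_coords v)"
      "length (proj_upper v z) = length (proj_coords v)"
      by (simp_all add: proj_lower_def proj_upper_def)
    ultimately have "(\<exists>u\<in>Lv_int v ` A. in_box (proj_lower v z) (proj_upper v z) u) \<longleftrightarrow>
        (\<forall>l\<in>E. 0 \<le> l (proj_box v z))"
      using E unfolding decides_boxes_def proj_box_def by blast
    then show ?thesis using reduction constraints True by blast
  qed
  then show "(\<exists>x\<in>A. in_box a b x) \<longleftrightarrow> (\<forall>l\<in>step_constraints v E. 0 \<le> l (interleave a b))"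
    by (simp add: z_def)
qed

lemma box_definable_base:
  assumes "Lv_int v ` A = {Lv_int v v}"
  shows "box_definable n A 1"
  unfolding box_definable_def
proof (intro exI conjI)
  show "finite (base_constraints v)" by (simp add: base_constraints_def)
  show "\<forall>l\<in>base_constraints v. modlin (2 * n) 1 l"
    using modlin_coord_upper_minus_lower[OF length_v] modlin_one_double_proj length_v
    by (auto simp: base_constraints_def set_zero_coords)
  show "decides_boxes n A (base_constraints v)" using assms by (rule decides_boxes_base)
qed

lemma box_definable_step:
  assumes "box_definable (length (proj_coords v)) (Lv_int v ` A) d" "0 < d"
  shows "box_definable n A (Suc d)"
proof -
  obtain E where E: "finite E" "\<forall>l\<in>E. modlin (2 * length (proj_coords v)) d l"
    "decides_boxes (length (proj_coords v)) (Lv_int v ` A) E"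
    using assms(1) unfolding box_definable_def by blast
  obtain d' where d': "d = Suc d'" using assms(2) by (cases d) auto
  have "modlin (2 * n) (Suc d) (\<lambda>z. l (proj_box v z))" if "l \<in> E" for l
    unfolding d'
  proof (rule modlin_comp)
    show "length (proj_box v z) = 2 * length (proj_coords v)" for z
      by (simp add: proj_box_def proj_lower_def proj_upper_def length_interleave)
    show "modlin_multiple (2 * n) 1 (\<lambda>z. proj_box v z ! q)" if "q < 2 * length (proj_coords v)" for q
      using length_v that by (rule modlin_multiple_proj_box)
    show "modlin (2 * length (proj_coords v)) (Suc d') l" using E(2) that d' by simp
  qed
  moreover have "modlin (2 * n) (Suc d) (\<lambda>z. coord_upper v i z - coord_lower v i z)"
    if "i \<in> set (supp_list v)" for i
    using modlin_coord_upper_minus_lower[OF length_v that that] by (rule modlin_mono) auto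
  ultimately show ?thesis
    unfolding box_definable_def
    by (intro exI[of _ "step_constraints v E"] conjI decides_boxes_step E(3))
      (auto simp: step_constraints_def E(1))
qed


lemma lin_indep_Z_Cons:
  assumes ws: "set ws \<subseteq> A"
    and indep: "lin_indep_Z (length (proj_coords v)) (map (Lv_int v) ws)"
  shows "lin_indep_Z n (v # ws)"
  unfolding lin_indep_Z_def
proof (rule allI, rule impI)
  fix c :: "nat \<Rightarrow> int"
  assume lin_rel: "\<forall>k<n. (\<Sum>i<length (v # ws). c i * (v # ws) ! i ! k) = 0"
  have rel: "(\<Sum>i<length ws. c (Suc i) * ws ! i ! k) = - c 0 * v ! k" if "k < n" for k
  proof -
    have "(\<Sum>i<Suc (length ws). c i * (v # ws) ! i ! k) = 0" using lin_rel that by simp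
    then show ?thesis unfolding sum.lessThan_Suc_shift by simp
  qed
  have quot: "(\<Sum>i<length ws. c (Suc i) * (ws ! i ! k div v ! k)) = - c 0"
    if k: "k \<in> set (supp_list v)" for k
  proof -
    have "v ! k * (\<Sum>i<length ws. c (Suc i) * (ws ! i ! k div v ! k)) =
        (\<Sum>i<length ws. c (Suc i) * ws ! i ! k)"
      unfolding sum_distrib_left
      using mult_quotient[OF _ k] ws nth_mem by (intro sum.cong) (auto simp: algebra_simps)
    also have "\<dots> = v ! k * (- c 0)"
      using rel k length_v by (simp add: set_supp_list)
    finally have "v ! k * (\<Sum>i<length ws. c (Suc i) * (ws ! i ! k div v ! k)) = v ! k * (- c 0)" .
    moreover have "v ! k \<noteq> 0" using k by (simp add: set_supp_list)
    ultimately show ?thesis by (metis mult_left_cancel)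
  qed
  have "\<forall>p<length (proj_coords v).
      (\<Sum>i<length (map (Lv_int v) ws). c (Suc i) * map (Lv_int v) ws ! i ! p) = 0"
  proof (intro allI impI)
    fix p assume p: "p < length (proj_coords v)"
    then have "proj_coords v ! p \<in> set (proj_coords v)" by simp
    then consider (pair) i j where "proj_coords v ! p = Inl (i, j)"
        "i \<in> set (supp_list v)" "j \<in> set (supp_list v)"
      | (zero) k where "proj_coords v ! p = Inr k" "k \<in> set (zero_coords v)"
      by (auto simp: set_proj_coords)
    then show "(\<Sum>i<length (map (Lv_int v) ws). c (Suc i) * map (Lv_int v) ws ! i ! p) = 0"
    proof cases
      case pair
      then show ?thesis
        using quot[of i] quot[of j] p by (simp add: Lv_int_def right_diff_distrib sum_subtractf)
    next
      case zero
      then show ?thesis using rel[of k] p length_v by (simp add: Lv_int_def set_zero_coords)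
    qed
  qed
  then have tail: "\<forall>i<length ws. c (Suc i) = 0"
    using indep[unfolded lin_indep_Z_def, rule_format, of "\<lambda>i. c (Suc i)"] by simp
  obtain k where k: "k \<in> set (supp_list v)" using supp_nonempty by (metis ex_in_conv)
  then have "c 0 = 0" using rel[of k] tail length_v by (simp add: set_supp_list)
  then show "\<forall>i<length (v # ws). c i = 0" using tail by (auto simp: less_Suc_eq_0_disj)
qed

end

section \<open>Rank and the main theorem\<close>

lemma lin_indep_Z_take:
  assumes "lin_indep_Z n vs"
  shows "lin_indep_Z n (take j vs)"
  unfolding lin_indep_Z_def
proof (rule allI, rule impI)
  fix c :: "nat \<Rightarrow> int"
  assume rel: "\<forall>k<n. (\<Sum>i<length (take j vs). c i * take j vs ! i ! k) = 0"
  define c' where "c' i = (if i < j then c i else 0)" for i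
  have "(\<Sum>i<length vs. c' i * vs ! i ! k) = (\<Sum>i<length (take j vs). c i * take j vs ! i ! k)" for k
    by (rule sum.mono_neutral_cong_right) (auto simp: c'_def)
  then have "\<forall>i<length vs. c' i = 0"
    using assms[unfolded lin_indep_Z_def, rule_format, of c'] rel by simp
  then show "\<forall>i<length (take j vs). c i = 0"
    unfolding c'_def by (metis length_take min_less_iff_conj)
qed

lemma has_rank_bound:
  assumes "has_rank n A r" "set vs \<subseteq> A" "lin_indep_Z n vs"
  shows "length vs \<le> r"
proof (rule ccontr)
  assume "\<not> length vs \<le> r"
  then have "length (take (Suc r) vs) = Suc r" by simp
  moreover have "set (take (Suc r) vs) \<subseteq> A" using assms(2) set_take_subset by fast
  moreover have "lin_indep_Z n (take (Suc r) vs)" using assms(3) by (rule lin_indep_Z_take)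
  ultimately show False using assms(1) unfolding has_rank_def by blast
qed

lemma lists_in_image:
  assumes "set us \<subseteq> f ` A"
  shows "\<exists>ws. set ws \<subseteq> A \<and> map f ws = us"
  using assms
proof (induction us)
  case Nil
  then show ?case by simp
next
  case (Cons u us)
  then obtain x ws where "x \<in> A" "u = f x" "set ws \<subseteq> A" "map f ws = us" by auto
  then show ?case by (intro exI[of _ "x # ws"]) simp
qed

lemma inE_int_subgroup: "inE n A \<Longrightarrow> int_subgroup n A"
  by (cases rule: inE.cases) auto

lemma inE_box_definable:
  assumes "inE n A"
  shows "\<exists>d\<ge>1. (\<exists>vs. length vs = d \<and> set vs \<subseteq> A \<and> lin_indep_Z n vs) \<and> box_definable n A d"
  using assms
proof (induction rule: inE.induct)
  case (1 n A v s m)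
  interpret dividing_element n A v
    using "1.hyps"(1,3-5) by unfold_locales auto
  have Lv_image: "Lv v ` map rat_of_int ` A = map rat_of_int ` Lv_int v ` A"
    unfolding image_image
    by (rule image_cong[OF refl], rule Lv_of_int)
      (simp_all add: int_subgroup_length[OF subgroup] length_v v_divides)
  have inj: "inj (map rat_of_int)" by (intro inj_mapI) (simp add: inj_on_def)
  from "1" consider (trivial) "Lv v ` map rat_of_int ` A = {zerovec m}"
    | (recursive) B where "inE m B"
      "\<exists>d\<ge>1. (\<exists>vs. length vs = d \<and> set vs \<subseteq> B \<and> lin_indep_Z m vs) \<and> box_definable m B d"
      "Lv v ` map rat_of_int ` A = map rat_of_int ` B"
    using "1.hyps"(7) by blast
  then show ?case
  proof cases
    case trivial
    then have "map rat_of_int ` Lv_int v ` A = map rat_of_int ` {zerovec m}"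
      using Lv_image by (simp add: zerovec_def)
    then have zero: "Lv_int v ` A = {zerovec m}" by (simp only: inj_image_eq_iff[OF inj])
    then have "Lv_int v v = zerovec m" using v_in_A by (metis image_eqI singletonD)
    with zero have "box_definable n A 1" by (intro box_definable_base) simp
    moreover have "lin_indep_Z n [v]"
      using lin_indep_Z_Cons[of "[]"] by (simp add: lin_indep_Z_def)
    ultimately show ?thesis
      using v_in_A by (intro exI[of _ 1] conjI exI[of _ "[v]"]) auto
  next
    case recursive
    then have B: "Lv_int v ` A = B" using Lv_image inj by (simp add: inj_image_eq_iff)
    have "length (proj_coords v) = m"
      using int_subgroup_length[OF inE_int_subgroup[OF recursive(1)]] B v_in_A length_Lv_int
      by (metis image_eqI)
    then obtain d us where d: "d \<ge> 1" "length us = d" "set us \<subseteq> Lv_int v ` A"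
      "lin_indep_Z (length (proj_coords v)) us"
      "box_definable (length (proj_coords v)) (Lv_int v ` A) d"
      using recursive(2) B by blast
    obtain ws where ws: "set ws \<subseteq> A" "map (Lv_int v) ws = us"
      using lists_in_image[OF d(3)] by blast
    have "lin_indep_Z n (v # ws)" using lin_indep_Z_Cons ws d(4) by simp
    moreover have "box_definable n A (Suc d)" using box_definable_step d(1,5) by simp
    ultimately show ?thesis
      using v_in_A ws d(2) by (intro exI[of _ "Suc d"] conjI exI[of _ "v # ws"]) auto
  qed
qed

lemma decides_boxes_nth:
  assumes A: "int_subgroup n A" and E: "decides_boxes n A E"
    and ab: "length a = n" "length b = n" "\<forall>i<n. a ! i \<le> b ! i"
  shows "(\<exists>x\<in>A. \<forall>i<n. a ! i \<le> x ! i \<and> x ! i \<le> b ! i) \<longleftrightarrow> (\<forall>l\<in>E. 0 \<le> l (interleave a b))"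
proof -
  have "(\<exists>x\<in>A. \<forall>i<n. a ! i \<le> x ! i \<and> x ! i \<le> b ! i) \<longleftrightarrow> (\<exists>x\<in>A. in_box a b x)"
    using int_subgroup_length[OF A] ab by (intro bex_cong refl) (simp add: in_box_iff_nth)
  also have "\<dots> \<longleftrightarrow> (\<forall>l\<in>E. 0 \<le> l (interleave a b))"
    using E ab unfolding decides_boxes_def by (simp add: list_all2_conv_all_nth)
  finally show ?thesis .
qed

theorem mainTheorem1:
  fixes n r :: nat and A :: "int list set"
  assumes "n \<ge> 1" and "inE n A" and "has_rank n A r"
  shows "\<exists>E. finite E \<and> (\<forall>l\<in>E. modlin (2 * n) r l) \<and>
    (\<forall>a b. length a = n \<longrightarrow> length b = n \<longrightarrow> (\<forall>i<n. a ! i \<le> b ! i) \<longrightarrow>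
       ((\<exists>x\<in>A. \<forall>i<n. a ! i \<le> x ! i \<and> x ! i \<le> b ! i) \<longleftrightarrow>
        (\<forall>l\<in>E. 0 \<le> l (interleave a b))))"
proof -
  obtain d vs where d: "1 \<le> d" "length vs = d" "set vs \<subseteq> A" "lin_indep_Z n vs"
    and "box_definable n A d"
    using inE_box_definable[OF assms(2)] by blast
  then obtain E where E: "finite E" "\<forall>l\<in>E. modlin (2 * n) d l" "decides_boxes n A E"
    unfolding box_definable_def by blast
  have "d \<le> r" using has_rank_bound[OF assms(3) d(3,4)] d(2) by simp
  then have "\<forall>l\<in>E. modlin (2 * n) r l" using E(2) d(1) by (auto intro: modlin_mono)
  then show ?thesis
    using E(1) decides_boxes_nth[OF inE_int_subgroup[OF assms(2)] E(3)] by blast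
qed

end
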